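(* Let $l\ge 1$ and let $\alpha,\beta,a,b,\gamma_1,\dots,\gamma_l,c_1,\dots,c_l$ be constants. Let $W=I+\sum_{k\ge1}w_k\lambda^{-k}$, where the $w_k$ are $2\times2$ matrix-valued functions of the variables $t_1,t_2,\dots$ and $a_1,\dots,a_l$ that do not depend on $x$. Let $U=W\sigma_3W^{-1}=\sigma_3+\sum_{k\ge1}u_k\lambda^{-k}$, and define $$B_n=\sigma_3\lambda^n+\sum_{k=0}^{n-1}u_{n-k}\lambda^k\ (n\ge1),\qquad R_n=\gamma_nI+c_n\Big(\sigma_3+\sum_{j\ge1}a_n^{-j}u_j\Big),\qquad C_n=-\frac{R_n}{\lambda-a_n},\qquad S_n=-\frac{\gamma_nI+c_n\sigma_3}{\lambda-a_n}$$ for $n=1,\dots,l$. Suppose $W$ satisfies the Sato equations $$\partial_{t_n}W=B_nW-W\sigma_3\lambda^n\ (n\ge1),\qquad \partial_{a_n}W=C_nW-WS_n\ (n=1,\dots,l).$$ Let $\Psi(\lambda)=W\Psi_0(\lambda)$ with $$\Psi_0(\lambda)=\lambda^{\alpha}(\lambda-1)^{\beta}\prod_{n=1}^l(\lambda-a_n)^{\gamma_n}e^{x\lambda}\,\mathrm{diag}\Big(\lambda^{a}(\lambda-1)^{b}\prod_{n=1}^l(\lambda-a_n)^{c_n}e^{\sum_{n\ge1}t_n\lambda^n},\ \lambda^{-a}(\lambda-1)^{-b}\prod_{n=1}^l(\lambda-a_n)^{-c_n}e^{-\sum_{n\ge1}t_n\lambda^n}\Big).$$ Then $\partial_x\Psi=\lambda\Psi$,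 $\partial_{t_n}\Psi=B_n\Psi$ for all $n\ge1$, and $\partial_{a_n}\Psi=C_n\Psi$ for $n=1,\dots,l$.
   Context: $\sigma_3=\mathrm{diag}(1,-1)$, $I$ is the $2\times 2$ identity. $W^{-1}=\sum_{k\ge0}v_k\lambda^{-k}$ denotes the inverse series, so $u_k=\sum_{j=1}^k[w_j,\sigma_3]v_{k-j}$. $\lambda$ is a spectral parameter independent of all the variables $x,t_n,a_n$. *)

theory Defs
  imports "HOL-Analysis.Analysis"
begin

type_synonym cmat = "complex^2^2"

definition sigma3 :: cmat where
  "sigma3 = (\<chi> i j. if i = j then (if i = 1 then 1 else -1) else 0)"

definition diag2 :: "complex \<Rightarrow> complex \<Rightarrow> cmat" where
  "diag2 p q = (\<chi> i j. if i = j then (if i = 1 then p else q) else 0)"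

definition smat :: "complex \<Rightarrow> cmat \<Rightarrow> cmat" where
  "smat c M = (\<chi> i j. c * M $ i $ j)"

definition mat_has_deriv :: "(complex \<Rightarrow> cmat) \<Rightarrow> cmat \<Rightarrow> complex \<Rightarrow> bool" where
  "mat_has_deriv F D s \<longleftrightarrow>
     (\<forall>i j. ((\<lambda>z. F z $ i $ j) has_field_derivative (D $ i $ j)) (at s))"

text \<open>coefficients v_k of the inverse series of W = I + sum_{k>=1} w_k lam^(-k)
  (w 0 is ignored, i.e. taken to be I): v_0 = I, v_k = - sum_{j=1}^k w_j v_(k-j)\<close>
function inv_coeffs :: "(nat \<Rightarrow> cmat) \<Rightarrow> nat \<Rightarrow> cmat" where
  "inv_coeffs w 0 = mat 1"
| "inv_coeffs w (Suc k) = - (\<Sum>j\<in>{1..Suc k}. w j ** inv_coeffs w (Suc k - j))"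
  by pat_completeness auto
termination by (relation "Wellfounded.measure (\<lambda>(w, k). k)") auto

definition U_coeffs :: "(nat \<Rightarrow> cmat) \<Rightarrow> nat \<Rightarrow> cmat" where
  "U_coeffs w k = (\<Sum>j\<in>{1..k}. (w j ** sigma3 - sigma3 ** w j) ** inv_coeffs w (k - j))"

end

theory Submission
  imports Defs
begin

text \<open>
  \<open>\<Psi> = W \<Psi>\<^sub>0\<close> with \<open>\<Psi>\<^sub>0\<close> diagonal, and each flow acts on \<open>\<Psi>\<^sub>0\<close> by left multiplication
  with the matrix \<open>S\<close> of the corresponding Sato equation: \<open>\<lambda> I\<close> for \<open>x\<close>, \<open>\<lambda>\<^sup>n \<sigma>\<^sub>3\<close> for
  \<open>t\<^sub>n\<close> (the flow only shifts the exponent \<open>\<Sum> t\<^sub>k \<lambda>\<^sup>k\<close>) and \<open>S\<^sub>n\<close> for \<open>a\<^sub>n\<close> (the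
  logarithmic derivative of \<open>(\<lambda> - a\<^sub>n)\<^sup>g\<close> is \<open>-g/(\<lambda> - a\<^sub>n)\<close>, which needs \<open>\<lambda> - a\<^sub>n\<close> off
  the branch cut). The Sato equation \<open>\<partial>W = X W - W S\<close> and the product rule then give
  \<open>\<partial>\<Psi> = (X W - W S) \<Psi>\<^sub>0 + W S \<Psi>\<^sub>0 = X \<Psi>\<close>.
\<close>

lemma mat_has_deriv_mult:
  assumes "mat_has_deriv F F' s" "mat_has_deriv G G' s"
  shows "mat_has_deriv (\<lambda>z. F z ** G z) (F' ** G s + F s ** G') s"
  unfolding mat_has_deriv_def
proof (intro allI)
  fix i j
  have "((\<lambda>z. \<Sum>k\<in>UNIV. F z $ i $ k * G z $ k $ j) has_field_derivative
          (\<Sum>k\<in>UNIV. F' $ i $ k * G s $ k $ j + F s $ i $ k * G' $ k $ j)) (at s)"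
    using assms unfolding mat_has_deriv_def by (intro DERIV_sum) (auto intro!: derivative_eq_intros)
  then show "((\<lambda>z. (F z ** G z) $ i $ j) has_field_derivative (F' ** G s + F s ** G') $ i $ j) (at s)"
    by (simp add: matrix_matrix_mult_def sum.distrib)
qed

lemma mat_has_deriv_const: "mat_has_deriv (\<lambda>z. M) 0 s"
  unfolding mat_has_deriv_def by simp

lemma matrix_diff_rdistrib:
  fixes A B :: "'a::comm_ring_1 ^ 'n ^ 'm" and C :: "'a ^ 'p ^ 'n"
  shows "(A - B) ** C = A ** C - B ** C"
  by (vector matrix_matrix_mult_def sum_subtractf left_diff_distrib)

text \<open>The point values \<open>W\<^sub>s\<close>, \<open>\<Psi>\<^sub>s\<close> are separate so that the lemma applies to partial
  derivatives, where \<open>W s\<close> is e.g. \<open>W (t(n := t n))\<close> rather than literally \<open>W t\<close>.\<close>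

lemma mat_has_deriv_dressing:
  assumes "mat_has_deriv W (X ** W\<^sub>s - W\<^sub>s ** S) s" and "mat_has_deriv \<Psi> (S ** \<Psi>\<^sub>s) s"
    and "W s = W\<^sub>s" and "\<Psi> s = \<Psi>\<^sub>s"
  shows "mat_has_deriv (\<lambda>z. W z ** \<Psi> z) (X ** (W\<^sub>s ** \<Psi>\<^sub>s)) s"
proof -
  have "(X ** W\<^sub>s - W\<^sub>s ** S) ** \<Psi>\<^sub>s + W\<^sub>s ** (S ** \<Psi>\<^sub>s) = X ** (W\<^sub>s ** \<Psi>\<^sub>s)"
    by (simp add: matrix_diff_rdistrib matrix_mul_assoc)
  then show ?thesis
    using mat_has_deriv_mult[OF assms(1,2)] assms(3,4) by simp
qed

lemma mat_has_deriv_diag2: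
  assumes "(p has_field_derivative p') (at s)" and "(q has_field_derivative q') (at s)"
  shows "mat_has_deriv (\<lambda>z. diag2 (p z) (q z)) (diag2 p' q') s"
  using assms unfolding mat_has_deriv_def diag2_def by simp

lemma diag2_mult: "diag2 p q ** diag2 p' q' = diag2 (p * p') (q * q')"
  by (simp add: diag2_def matrix_matrix_mult_def vec_eq_iff forall_2 sum_2)

lemma smat_diag2: "smat k (diag2 p q) = diag2 (k * p) (k * q)"
  by (simp add: smat_def diag2_def vec_eq_iff)

lemma smat_mat1_eq_diag2: "smat k (mat 1) = diag2 k k"
  by (simp add: smat_def diag2_def mat_def vec_eq_iff)

lemma smat_sigma3_eq_diag2: "smat k sigma3 = diag2 k (- k)"
  by (simp add: smat_def diag2_def sigma3_def vec_eq_iff)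

lemma diag2_add: "diag2 p q + diag2 p' q' = diag2 (p + p') (q + q')"
  by (simp add: diag2_def vec_eq_iff)

lemma diag2_scalar_mult: "diag2 k k ** M = smat k M"
  by (simp add: diag2_def smat_def matrix_matrix_mult_def vec_eq_iff forall_2 sum_2)

lemma mult_diag2_scalar: "M ** diag2 k k = smat k M"
  by (simp add: diag2_def smat_def matrix_matrix_mult_def vec_eq_iff forall_2 sum_2 mult.commute)

lemma suminf_fun_upd:
  fixes f :: "nat \<Rightarrow> 'a::real_normed_vector"
  assumes "summable f"
  shows "suminf (f(i := y)) = suminf f + (y - f i)"
proof -
  have "(\<lambda>k. f k + (if k = i then y - f i else 0)) sums (suminf f + (y - f i))"
    using assms by (intro sums_add summable_sums sums_single)
  moreover have "(\<lambda>k. f k + (if k = i then y - f i else 0)) = f(i := y)"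
    by auto
  ultimately show ?thesis
    by (simp add: sums_iff)
qed

lemma has_field_derivative_prod_fun_upd:
  fixes f :: "'i \<Rightarrow> 'a::real_normed_field \<Rightarrow> 'a"
  assumes "finite I" and "n \<in> I"
    and "(f n has_field_derivative \<mu> * f n (a n)) (at (a n))"
  shows "((\<lambda>s. \<Prod>m\<in>I. f m ((a(n := s)) m)) has_field_derivative \<mu> * (\<Prod>m\<in>I. f m (a m))) (at (a n))"
proof -
  have "(\<Prod>m\<in>I. f m ((a(n := s)) m)) = f n s * (\<Prod>m\<in>I - {n}. f m (a m))" for s
    using assms(1,2) by (simp add: prod.remove)
  moreover have "(\<Prod>m\<in>I. f m (a m)) = f n (a n) * (\<Prod>m\<in>I - {n}. f m (a m))"
    using assms(1,2) by (simp add: prod.remove)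
  ultimately show ?thesis
    using DERIV_cmult_right[OF assms(3)] by (simp add: mult.assoc)
qed

lemma has_field_derivative_mult_log:
  assumes "(f has_field_derivative \<mu> * f s) (at s)" and "(g has_field_derivative \<nu> * g s) (at s)"
  shows "((\<lambda>z. f z * g z) has_field_derivative (\<mu> + \<nu>) * (f s * g s)) (at s)"
  using DERIV_mult[OF assms] by (simp add: algebra_simps)

lemma has_field_derivative_diff_powr:
  fixes b :: complex
  assumes "b - s \<notin> \<real>\<^sub>\<le>\<^sub>0"
  shows "((\<lambda>z. (b - z) powr g) has_field_derivative - g / (b - s) * (b - s) powr g) (at s)"
proof -
  have "b - s \<noteq> 0"
    using assms by auto
  then have "g * (b - s) powr (g - 1) * (0 - 1) = - g / (b - s) * (b - s) powr g"
    by (simp add: powr_diff)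
  then show ?thesis
    using assms by (auto intro!: derivative_eq_intros)
qed

context
  fixes l :: nat and lam \<alpha> \<beta> ac bc :: complex and \<gamma> c :: "nat \<Rightarrow> complex"
begin

text \<open>\<open>\<epsilon> = 1\<close> and \<open>\<epsilon> = -1\<close> give the two diagonal entries of \<open>\<Psi>\<^sub>0\<close>.\<close>

definition wave_entry ::
    "complex \<Rightarrow> complex \<Rightarrow> (nat \<Rightarrow> complex) \<Rightarrow> (nat \<Rightarrow> complex) \<Rightarrow> complex" where
  "wave_entry \<epsilon> x t a =
     lam powr \<alpha> * (lam - 1) powr \<beta> * (\<Prod>n\<in>{1..l}. (lam - a n) powr \<gamma> n) * exp (x * lam)
     * (lam powr (\<epsilon> * ac) * (lam - 1) powr (\<epsilon> * bc) * (\<Prod>n\<in>{1..l}. (lam - a n) powr (\<epsilon> * c n))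
        * exp (\<epsilon> * (\<Sum>k. t (Suc k) * lam ^ Suc k)))"

lemma wave_entry_deriv_x:
  "((\<lambda>y. wave_entry \<epsilon> y t a) has_field_derivative lam * wave_entry \<epsilon> x t a) (at x)"
  unfolding wave_entry_def by (auto intro!: derivative_eq_intros simp: algebra_simps)

lemma wave_entry_deriv_t:
  assumes "summable (\<lambda>k. t (Suc k) * lam ^ Suc k)" and "n \<ge> 1"
  shows "((\<lambda>s. wave_entry \<epsilon> x (t(n := s)) a) has_field_derivative
           \<epsilon> * lam ^ n * wave_entry \<epsilon> x t a) (at (t n))"
proof -
  obtain m where n: "n = Suc m"
    using assms(2) by (cases n) auto
  define E where "E = (\<Sum>k. t (Suc k) * lam ^ Suc k)"
  have "(\<lambda>k. (t(n := s)) (Suc k) * lam ^ Suc k)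
      = (\<lambda>k. t (Suc k) * lam ^ Suc k)(m := s * lam ^ n)" for s
    by (auto simp: fun_eq_iff n)
  then have upd: "(\<Sum>k. (t(n := s)) (Suc k) * lam ^ Suc k) = E + (s - t n) * lam ^ n" for s
    using assms(1) by (simp add: suminf_fun_upd E_def n algebra_simps)
  show ?thesis
    unfolding wave_entry_def upd E_def[symmetric]
    by (auto intro!: derivative_eq_intros simp: algebra_simps)
qed

lemma wave_entry_deriv_a:
  assumes "n \<in> {1..l}" and "lam - a n \<notin> \<real>\<^sub>\<le>\<^sub>0"
  shows "((\<lambda>s. wave_entry \<epsilon> x t (a(n := s))) has_field_derivative
           - (\<gamma> n + \<epsilon> * c n) / (lam - a n) * wave_entry \<epsilon> x t a) (at (a n))"
proof -
  define P where "P g s = (\<Prod>m\<in>{1..l}. (lam - (a(n := s)) m) powr g m)" for g s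
  define K where "K = lam powr \<alpha> * (lam - 1) powr \<beta> * exp (x * lam) * lam powr (\<epsilon> * ac)
    * (lam - 1) powr (\<epsilon> * bc) * exp (\<epsilon> * (\<Sum>k. t (Suc k) * lam ^ Suc k))"
  have P': "(P g has_field_derivative - g n / (lam - a n) * P g (a n)) (at (a n))" for g
    unfolding P_def fun_upd_triv using assms
    by (intro has_field_derivative_prod_fun_upd[where f = "\<lambda>m z. (lam - z) powr g m"]
        has_field_derivative_diff_powr) auto
  have entry: "wave_entry \<epsilon> x t (a(n := s)) = K * (P \<gamma> s * P (\<lambda>m. \<epsilon> * c m) s)" for s
    by (simp add: wave_entry_def K_def P_def del: fun_upd_apply)
  have "((\<lambda>s. K * (P \<gamma> s * P (\<lambda>m. \<epsilon> * c m) s)) has_field_derivative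
          K * ((- \<gamma> n / (lam - a n) + - (\<epsilon> * c n) / (lam - a n))
              * (P \<gamma> (a n) * P (\<lambda>m. \<epsilon> * c m) (a n)))) (at (a n))"
    by (intro DERIV_cmult has_field_derivative_mult_log P')
  then show ?thesis
    using entry[of "a n"] by (simp add: entry diff_divide_distrib algebra_simps)
qed

definition bare_wave :: "complex \<Rightarrow> (nat \<Rightarrow> complex) \<Rightarrow> (nat \<Rightarrow> complex) \<Rightarrow> cmat" where
  "bare_wave x t a = diag2 (wave_entry 1 x t a) (wave_entry (- 1) x t a)"

lemma bare_wave_deriv_x:
  "mat_has_deriv (\<lambda>y. bare_wave y t a) (diag2 lam lam ** bare_wave x t a) x"
  unfolding bare_wave_def diag2_mult by (intro mat_has_deriv_diag2 wave_entry_deriv_x)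

lemma bare_wave_deriv_t:
  assumes "summable (\<lambda>k. t (Suc k) * lam ^ Suc k)" and "n \<ge> 1"
  shows "mat_has_deriv (\<lambda>s. bare_wave x (t(n := s)) a)
    (smat (lam ^ n) sigma3 ** bare_wave x t a) (t n)"
proof -
  have "mat_has_deriv (\<lambda>s. bare_wave x (t(n := s)) a)
      (diag2 (1 * lam ^ n * wave_entry 1 x t a) (- 1 * lam ^ n * wave_entry (- 1) x t a)) (t n)"
    unfolding bare_wave_def using assms by (intro mat_has_deriv_diag2 wave_entry_deriv_t)
  then show ?thesis
    by (simp add: bare_wave_def smat_sigma3_eq_diag2 diag2_mult)
qed

lemma bare_wave_deriv_a:
  assumes "n \<in> {1..l}" and "lam - a n \<notin> \<real>\<^sub>\<le>\<^sub>0"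
  shows "mat_has_deriv (\<lambda>s. bare_wave x t (a(n := s)))
    (smat (- inverse (lam - a n)) (smat (\<gamma> n) (mat 1) + smat (c n) sigma3) ** bare_wave x t a) (a n)"
proof -
  have S_eq: "smat (- inverse (lam - a n)) (smat (\<gamma> n) (mat 1) + smat (c n) sigma3)
      = diag2 (- (\<gamma> n + 1 * c n) / (lam - a n)) (- (\<gamma> n + - 1 * c n) / (lam - a n))"
    by (simp add: smat_mat1_eq_diag2 smat_sigma3_eq_diag2 diag2_add smat_diag2 divide_inverse
        algebra_simps)
  show ?thesis
    unfolding bare_wave_def S_eq diag2_mult using assms by (intro mat_has_deriv_diag2 wave_entry_deriv_a)
qed

end

theorem theorem2p3:
  fixes l :: nat
    and lam \<alpha> \<beta> ac bc :: complex
    and \<gamma> c :: "nat \<Rightarrow> complex"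
    and w :: "nat \<Rightarrow> (nat \<Rightarrow> complex) \<Rightarrow> (nat \<Rightarrow> complex) \<Rightarrow> cmat"
    and W :: "(nat \<Rightarrow> complex) \<Rightarrow> (nat \<Rightarrow> complex) \<Rightarrow> cmat"
    and B :: "nat \<Rightarrow> (nat \<Rightarrow> complex) \<Rightarrow> (nat \<Rightarrow> complex) \<Rightarrow> cmat"
    and R C :: "nat \<Rightarrow> (nat \<Rightarrow> complex) \<Rightarrow> (nat \<Rightarrow> complex) \<Rightarrow> cmat"
    and S :: "nat \<Rightarrow> (nat \<Rightarrow> complex) \<Rightarrow> cmat"
    and Dom :: "((nat \<Rightarrow> complex) \<times> (nat \<Rightarrow> complex)) set"
    and Psi0 Psi :: "complex \<Rightarrow> (nat \<Rightarrow> complex) \<Rightarrow> (nat \<Rightarrow> complex) \<Rightarrow> cmat"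
  assumes l: "l \<ge> 1"
  defines "W \<equiv> (\<lambda>t a. mat 1 + (\<Sum>k. smat (inverse lam ^ Suc k) (w (Suc k) t a)))"
    and "B \<equiv> (\<lambda>n t a. smat (lam ^ n) sigma3
                 + (\<Sum>k<n. smat (lam ^ k) (U_coeffs (\<lambda>j. w j t a) (n - k))))"
    and "R \<equiv> (\<lambda>n t a. smat (\<gamma> n) (mat 1)
                 + smat (c n) (sigma3 + (\<Sum>j. smat (inverse (a n) ^ Suc j)
                                              (U_coeffs (\<lambda>i. w i t a) (Suc j)))))"
    and "C \<equiv> (\<lambda>n t a. smat (- inverse (lam - a n)) (R n t a))"
    and "S \<equiv> (\<lambda>n a. smat (- inverse (lam - a n)) (smat (\<gamma> n) (mat 1) + smat (c n) sigma3))"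
    and "Dom \<equiv> {(t, a). summable (\<lambda>k. t (Suc k) * lam ^ Suc k)
                        \<and> (\<forall>n\<in>{1..l}. lam - a n \<notin> \<real>\<^sub>\<le>\<^sub>0)}"
    and "Psi0 \<equiv> (\<lambda>x t a.
           smat (lam powr \<alpha> * (lam - 1) powr \<beta> * (\<Prod>n\<in>{1..l}. (lam - a n) powr \<gamma> n) * exp (x * lam))
             (diag2
               (lam powr ac * (lam - 1) powr bc * (\<Prod>n\<in>{1..l}. (lam - a n) powr c n)
                  * exp (\<Sum>k. t (Suc k) * lam ^ Suc k))
               (lam powr (- ac) * (lam - 1) powr (- bc) * (\<Prod>n\<in>{1..l}. (lam - a n) powr (- c n))
                  * exp (- (\<Sum>k. t (Suc k) * lam ^ Suc k)))))"
    and "Psi \<equiv> (\<lambda>x t a. W t a ** Psi0 x t a)"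
  assumes sato_t: "\<And>t a n. (t, a) \<in> Dom \<Longrightarrow> n \<ge> 1 \<Longrightarrow>
      mat_has_deriv (\<lambda>s. W (t(n := s)) a) (B n t a ** W t a - W t a ** smat (lam ^ n) sigma3) (t n)"
    and sato_a: "\<And>t a n. (t, a) \<in> Dom \<Longrightarrow> n \<in> {1..l} \<Longrightarrow>
      mat_has_deriv (\<lambda>s. W t (a(n := s))) (C n t a ** W t a - W t a ** S n a) (a n)"
  shows "\<forall>x t a. (t, a) \<in> Dom \<longrightarrow>
           mat_has_deriv (\<lambda>y. Psi y t a) (smat lam (Psi x t a)) x
         \<and> (\<forall>n\<ge>1. mat_has_deriv (\<lambda>s. Psi x (t(n := s)) a) (B n t a ** Psi x t a) (t n))
         \<and> (\<forall>n\<in>{1..l}. mat_has_deriv (\<lambda>s. Psi x t (a(n := s))) (C n t a ** Psi x t a) (a n))"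
proof (intro allI impI)
  fix x t a
  assume Dom: "(t, a) \<in> Dom"
  then have summable: "summable (\<lambda>k. t (Suc k) * lam ^ Suc k)"
    and branch: "\<And>n. n \<in> {1..l} \<Longrightarrow> lam - a n \<notin> \<real>\<^sub>\<le>\<^sub>0"
    by (auto simp: Dom_def)
  have Psi0: "Psi0 = bare_wave l lam \<alpha> \<beta> ac bc \<gamma> c"
    by (simp add: fun_eq_iff Psi0_def bare_wave_def wave_entry_def smat_diag2)
  have W_const: "mat_has_deriv (\<lambda>y. W t a) (diag2 lam lam ** W t a - W t a ** diag2 lam lam) x"
    using mat_has_deriv_const by (simp add: diag2_scalar_mult mult_diag2_scalar)
  have "mat_has_deriv (\<lambda>y. Psi y t a) (diag2 lam lam ** Psi x t a) x"
    unfolding Psi_def Psi0 by (rule mat_has_deriv_dressing[OF W_const bare_wave_deriv_x]) simp_all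
  moreover have "mat_has_deriv (\<lambda>s. Psi x (t(n := s)) a) (B n t a ** Psi x t a) (t n)"
    if "n \<ge> 1" for n
    unfolding Psi_def Psi0
    by (rule mat_has_deriv_dressing[OF sato_t[OF Dom that] bare_wave_deriv_t[OF summable that]])
      simp_all
  moreover have "mat_has_deriv (\<lambda>s. Psi x t (a(n := s))) (C n t a ** Psi x t a) (a n)"
    if "n \<in> {1..l}" for n
    unfolding Psi_def Psi0
    by (rule mat_has_deriv_dressing[OF sato_a[OF Dom that, unfolded S_def]],
        rule bare_wave_deriv_a[where a = a, OF that branch[OF that]]) simp_all
  ultimately show "mat_has_deriv (\<lambda>y. Psi y t a) (smat lam (Psi x t a)) x
         \<and> (\<forall>n\<ge>1. mat_has_deriv (\<lambda>s. Psi x (t(n := s)) a) (B n t a ** Psi x t a) (t n))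
         \<and> (\<forall>n\<in>{1..l}. mat_has_deriv (\<lambda>s. Psi x t (a(n := s))) (C n t a ** Psi x t a) (a n))"
    by (simp add: diag2_scalar_mult)
qed

end
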